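(* Let $\mathcal H_h=\mathcal X_h\times\mathcal Y_h$ be a closed subspace of $\mathcal H=H^1(\Omega)^d\times H^{-1/2}(\Gamma)^d$ and let $\boldsymbol\xi^1,\dots,\boldsymbol\xi^D\in\mathcal Y_h$, $D\in\mathbb N$, be linearly independent. Define for $(\boldsymbol u,\boldsymbol\phi),(\boldsymbol v,\boldsymbol\psi)\in\mathcal H_h$ \[ \widetilde b((\boldsymbol u,\boldsymbol\phi),(\boldsymbol v,\boldsymbol\psi)):=b((\boldsymbol u,\boldsymbol\phi),(\boldsymbol v,\boldsymbol\psi))+\sum_{j=1}^D\langle\boldsymbol\xi^j,(\tfrac12-\mathcal K)\boldsymbol u+\mathcal V\boldsymbol\phi\rangle_\Gamma\,\langle\boldsymbol\xi^j,(\tfrac12-\mathcal K)\boldsymbol v+\mathcal V\boldsymbol\psi\rangle_\Gamma, \] \[ \widetilde F(\boldsymbol v,\boldsymbol\psi):=F(\boldsymbol v,\boldsymbol\psi)+\sum_{j=1}^D\langle\boldsymbol\xi^j,(\tfrac12-\mathcal K)\boldsymbol u_0\rangle_\Gamma\,\langle\boldsymbol\xi^j,(\tfrac12-\mathcal K)\boldsymbol v+\mathcal V\boldsymbol\psi\rangle_\Gamma. \] Then $(\boldsymbol u,\boldsymbol\phi)\in\mathcal H_h$ satisfies $b((\boldsymbol u,\boldsymbol\phi),(\boldsymbol v,\boldsymbol\psi))=F(\boldsymbol v,\boldsymbol\psi)$ for all $(\boldsymbol v,\boldsymbol\psi)\in\mathcal H_h$ if and only if it satisfies $\widetilde b((\boldsymbol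 u,\boldsymbol\phi),(\boldsymbol v,\boldsymbol\psi))=\widetilde F(\boldsymbol v,\boldsymbol\psi)$ for all $(\boldsymbol v,\boldsymbol\psi)\in\mathcal H_h$.
   Context: Let $d\in\{2,3\}$, $\Omega\subset\mathbb R^d$ a bounded connected Lipschitz domain with polyhedral boundary $\Gamma$, outer normal $\boldsymbol n$. $\langle\cdot,\cdot\rangle_\Omega$ is the $L^2(\Omega)$ inner product (Frobenius for tensors), $\langle\cdot,\cdot\rangle_\Gamma$ the extended $L^2(\Gamma)$ duality. $\boldsymbol\epsilon(\boldsymbol u)=\frac12(\nabla\boldsymbol u+\nabla\boldsymbol u^T)$. Fix $\lambda^{\rm ext},\mu^{\rm ext}>0$, $\boldsymbol\sigma^{\rm ext}(\boldsymbol u)=\lambda^{\rm ext}\mathrm{div}(\boldsymbol u)\boldsymbol I+2\mu^{\rm ext}\boldsymbol\epsilon(\boldsymbol u)$, conormal derivative $\gamma_1\boldsymbol u=\boldsymbol\sigma^{\rm ext}(\boldsymbol u)\boldsymbol n$. $\mathcal V,\mathcal K,\mathcal K',\mathcal W$ are the single-layer, double-layer, adjoint double-layer and hypersingular boundary integral operators of linear isotropic elastostatics with Lamé constants $\lambda^{\rm ext},\mu^{\rm ext}$ (built from the Kelvin tensor $\boldsymbol G_{jk}(\boldsymbol z)=\frac{\lambda^{\rm ext}+\mu^{\rm ext}}{2\mu^{\rm ext}(\lambda^{\rm ext}+2\mu^{\rm ext})}(\frac{\lambda^{\rm ext}+3\mu^{\rm ext}}{\lambda^{\rm ext}+\mu^{\rm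 ext}}G(\boldsymbol z)\delta_{jk}+z_jz_k/|\boldsymbol z|^d)$, $G$ the Laplace fundamental solution; $\mathcal V\boldsymbol\phi=\int_\Gamma\boldsymbol G(\cdot-\boldsymbol y)\boldsymbol\phi\,d\Gamma_y$, $\mathcal K\boldsymbol v=\int_\Gamma\gamma_{1,\boldsymbol y}\boldsymbol G(\cdot-\boldsymbol y)\boldsymbol v\,d\Gamma_y$, $\mathcal W=-\gamma_1\mathcal K$). Standing assumption: $\mathcal V$ is symmetric and elliptic on $H^{-1/2}(\Gamma)^d$ (in 2D achieved by scaling). $\mathcal A:\mathbb R^{d\times d}_{\rm sym}\to\mathbb R^{d\times d}_{\rm sym}$ is a strongly monotone and Lipschitz continuous material law (in the sense $C_{\mathcal A}\|\boldsymbol\epsilon(\boldsymbol u-\boldsymbol v)\|^2\le\langle\mathcal A\boldsymbol\epsilon(\boldsymbol u)-\mathcal A\boldsymbol\epsilon(\boldsymbol v),\boldsymbol\epsilon(\boldsymbol u-\boldsymbol v)\rangle_\Omega$, $\|\mathcal A\boldsymbol\epsilon(\boldsymbol u)-\mathcal A\boldsymbol\epsilon(\boldsymbol v)\|_{L^2}\le L_{\mathcal A}\|\boldsymbol\epsilon(\boldsymbol u-\boldsymbol v)\|_{L^2}$). Data $\boldsymbol f\in L^2(\Omega)^d$, $\boldsymbol u_0\in H^{1/2}(\Gamma)^d$, $\boldsymbol\phi_0\in H^{-1/2}(\Gamma)^d$. The symmetric coupling forms are $b((\boldsymbol u,\boldsymbol\phi),(\boldsymbol v,\boldsymbol\psi))=\langle\mathcal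 A\boldsymbol\epsilon(\boldsymbol u),\boldsymbol\epsilon(\boldsymbol v)\rangle_\Omega+\langle\mathcal W\boldsymbol u,\boldsymbol v\rangle_\Gamma+\langle(\mathcal K'-\tfrac12)\boldsymbol\phi,\boldsymbol v\rangle_\Gamma+\langle\boldsymbol\psi,(\tfrac12-\mathcal K)\boldsymbol u+\mathcal V\boldsymbol\phi\rangle_\Gamma$ and $F(\boldsymbol v,\boldsymbol\psi)=\langle\boldsymbol f,\boldsymbol v\rangle_\Omega+\langle\boldsymbol\phi_0+\mathcal W\boldsymbol u_0,\boldsymbol v\rangle_\Gamma+\langle\boldsymbol\psi,(\tfrac12-\mathcal K)\boldsymbol u_0\rangle_\Gamma$. *)

theory Defs
  imports "HOL-Analysis.Analysis"
begin

text \<open>Types: 'x models H^1(Omega)^d, 'y models H^{-1/2}(Gamma)^d, 'z models H^{1/2}(Gamma)^d,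
  'e models L^2(Omega)^{d x d}_sym (strain tensors), 'l models L^2(Omega)^d.
  eps: symmetric gradient, tr: trace H^1 -> H^{1/2}, iota: embedding H^1 -> L^2,
  dual psi v = extended L^2(Gamma) duality, V K K' W the boundary integral operators,
  A the material law.\<close>

definition coupling_b ::
  "('x \<Rightarrow> 'e::real_inner) \<Rightarrow> ('e \<Rightarrow> 'e) \<Rightarrow> ('x \<Rightarrow> 'z::real_vector) \<Rightarrow> ('y \<Rightarrow> 'z \<Rightarrow> real)
   \<Rightarrow> ('y \<Rightarrow> 'z) \<Rightarrow> ('z \<Rightarrow> 'z) \<Rightarrow> ('y::real_vector \<Rightarrow> 'y) \<Rightarrow> ('z \<Rightarrow> 'y)
   \<Rightarrow> 'x \<Rightarrow> 'y \<Rightarrow> 'x \<Rightarrow> 'y \<Rightarrow> real" where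
  "coupling_b eps A tr dual V K K' W u \<phi> v \<psi> =
     inner (A (eps u)) (eps v) + dual (W (tr u)) (tr v)
     + dual (K' \<phi> - (1/2) *\<^sub>R \<phi>) (tr v)
     + dual \<psi> ((1/2) *\<^sub>R tr u - K (tr u) + V \<phi>)"

definition coupling_F ::
  "('x \<Rightarrow> 'l::real_inner) \<Rightarrow> ('x \<Rightarrow> 'z::real_vector) \<Rightarrow> ('y::real_vector \<Rightarrow> 'z \<Rightarrow> real)
   \<Rightarrow> ('z \<Rightarrow> 'z) \<Rightarrow> ('z \<Rightarrow> 'y) \<Rightarrow> 'l \<Rightarrow> 'z \<Rightarrow> 'y \<Rightarrow> 'x \<Rightarrow> 'y \<Rightarrow> real" where
  "coupling_F iota tr dual K W f u0 \<phi>0 v \<psi> =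
     inner f (iota v) + dual (\<phi>0 + W u0) (tr v)
     + dual \<psi> ((1/2) *\<^sub>R u0 - K u0)"

definition stab_b ::
  "('x \<Rightarrow> 'e::real_inner) \<Rightarrow> ('e \<Rightarrow> 'e) \<Rightarrow> ('x \<Rightarrow> 'z::real_vector) \<Rightarrow> ('y \<Rightarrow> 'z \<Rightarrow> real)
   \<Rightarrow> ('y \<Rightarrow> 'z) \<Rightarrow> ('z \<Rightarrow> 'z) \<Rightarrow> ('y::real_vector \<Rightarrow> 'y) \<Rightarrow> ('z \<Rightarrow> 'y)
   \<Rightarrow> nat \<Rightarrow> (nat \<Rightarrow> 'y)
   \<Rightarrow> 'x \<Rightarrow> 'y \<Rightarrow> 'x \<Rightarrow> 'y \<Rightarrow> real" where
  "stab_b eps A tr dual V K K' W D \<xi> u \<phi> v \<psi> =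
     coupling_b eps A tr dual V K K' W u \<phi> v \<psi>
     + (\<Sum>j=1..D. dual (\<xi> j) ((1/2) *\<^sub>R tr u - K (tr u) + V \<phi>)
                 * dual (\<xi> j) ((1/2) *\<^sub>R tr v - K (tr v) + V \<psi>))"

definition stab_F ::
  "('x \<Rightarrow> 'l::real_inner) \<Rightarrow> ('x \<Rightarrow> 'z::real_vector) \<Rightarrow> ('y::real_vector \<Rightarrow> 'z \<Rightarrow> real)
   \<Rightarrow> ('y \<Rightarrow> 'z) \<Rightarrow> ('z \<Rightarrow> 'z) \<Rightarrow> ('z \<Rightarrow> 'y) \<Rightarrow> 'l \<Rightarrow> 'z \<Rightarrow> 'y
   \<Rightarrow> nat \<Rightarrow> (nat \<Rightarrow> 'y) \<Rightarrow> 'x \<Rightarrow> 'y \<Rightarrow> real" where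
  "stab_F iota tr dual V K W f u0 \<phi>0 D \<xi> v \<psi> =
     coupling_F iota tr dual K W f u0 \<phi>0 v \<psi>
     + (\<Sum>j=1..D. dual (\<xi> j) ((1/2) *\<^sub>R u0 - K u0)
                 * dual (\<xi> j) ((1/2) *\<^sub>R tr v - K (tr v) + V \<psi>))"

end

theory Submission
  imports Defs
begin

text \<open>The stabilized problem differs from the original one only by the term
  \<open>\<Sum>\<^sub>j c\<^sub>j \<langle>\<xi>\<^sub>j, (1/2 - K) v + V \<psi>\<rangle>\<close>, where \<open>c\<^sub>j = \<langle>\<xi>\<^sub>j, R\<rangle>\<close> and \<open>R\<close> is the residual of the
  boundary integral equation. Testing the original problem with \<open>(0, \<xi>\<^sub>j)\<close> gives \<open>c\<^sub>j = 0\<close>.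
  Conversely, testing the stabilized problem with \<open>(0, \<psi>)\<close>, \<open>\<psi> = \<Sum>\<^sub>j c\<^sub>j \<xi>\<^sub>j\<close>, gives
  \<open>\<Sum>\<^sub>j c\<^sub>j\<^sup>2 + \<langle>\<psi>, V \<psi>\<rangle> = 0\<close>, so \<open>c = 0\<close> because \<open>V\<close> is positive semidefinite.\<close>

definition calderon_residual :: "('z \<Rightarrow> 'z) \<Rightarrow> ('y \<Rightarrow> 'z) \<Rightarrow> 'z \<Rightarrow> 'y \<Rightarrow> 'z::real_vector" where
  "calderon_residual K V w \<psi> = (1/2) *\<^sub>R w - K w + V \<psi>"

lemma calderon_residual_zero_left:
  assumes "linear K"
  shows "calderon_residual K V 0 \<psi> = V \<psi>"
  using assms by (simp add: calderon_residual_def linear_0)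

lemma stab_b_minus_stab_F:
  assumes "bounded_bilinear dual"
  shows "stab_b eps A tr dual V K K' W D \<xi> u \<phi> v \<psi> - stab_F iota tr dual V K W f u0 \<phi>0 D \<xi> v \<psi>
    = coupling_b eps A tr dual V K K' W u \<phi> v \<psi> - coupling_F iota tr dual K W f u0 \<phi>0 v \<psi>
      + (\<Sum>j=1..D. dual (\<xi> j) (calderon_residual K V (tr u) \<phi> - ((1/2) *\<^sub>R u0 - K u0))
                   * dual (\<xi> j) (calderon_residual K V (tr v) \<psi>))"
proof -
  interpret bounded_bilinear dual by (rule assms)
  show ?thesis
    by (simp add: stab_b_def stab_F_def calderon_residual_def diff_right left_diff_distrib
        sum_subtractf)
qed

lemma coupling_b_minus_coupling_F_zero_test:
  assumes "linear eps" "linear tr" "linear iota" "bounded_bilinear dual"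
  shows "coupling_b eps A tr dual V K K' W u \<phi> 0 \<psi> - coupling_F iota tr dual K W f u0 \<phi>0 0 \<psi>
    = dual \<psi> (calderon_residual K V (tr u) \<phi> - ((1/2) *\<^sub>R u0 - K u0))"
proof -
  interpret bounded_bilinear dual by (rule assms(4))
  show ?thesis
    using assms(1-3)
    by (simp add: coupling_b_def coupling_F_def calderon_residual_def linear_0 zero_right
        diff_right)
qed

lemma stab_eq_iff_coupling_eq:
  assumes "bounded_bilinear dual"
    and "\<forall>j\<in>{1..D}. dual (\<xi> j) (calderon_residual K V (tr u) \<phi> - ((1/2) *\<^sub>R u0 - K u0)) = 0"
  shows "stab_b eps A tr dual V K K' W D \<xi> u \<phi> v \<psi> = stab_F iota tr dual V K W f u0 \<phi>0 D \<xi> v \<psi>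
    \<longleftrightarrow> coupling_b eps A tr dual V K K' W u \<phi> v \<psi> = coupling_F iota tr dual K W f u0 \<phi>0 v \<psi>"
proof -
  have "stab_b eps A tr dual V K K' W D \<xi> u \<phi> v \<psi> - stab_F iota tr dual V K W f u0 \<phi>0 D \<xi> v \<psi>
      = coupling_b eps A tr dual V K K' W u \<phi> v \<psi> - coupling_F iota tr dual K W f u0 \<phi>0 v \<psi>"
    using assms(2) by (simp add: stab_b_minus_stab_F[OF assms(1)])
  then show ?thesis
    by (metis eq_iff_diff_eq_0)
qed

lemma stabilization_coefficients_vanish:
  assumes "bounded_bilinear dual" and "finite J"
    and \<psi>_def: "\<psi> = (\<Sum>j\<in>J. dual (\<xi> j) r *\<^sub>R \<xi> j)"
    and V_nonneg: "0 \<le> dual \<psi> (V \<psi>)"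
    and tested: "dual \<psi> r + (\<Sum>j\<in>J. dual (\<xi> j) r * dual (\<xi> j) (V \<psi>)) = 0"
  shows "\<forall>j\<in>J. dual (\<xi> j) r = 0"
proof -
  interpret bounded_bilinear dual by (rule assms(1))
  have "dual \<psi> r = (\<Sum>j\<in>J. (dual (\<xi> j) r)\<^sup>2)"
    by (simp add: \<psi>_def sum_left scaleR_left power2_eq_square)
  moreover have "(\<Sum>j\<in>J. dual (\<xi> j) r * dual (\<xi> j) (V \<psi>)) = dual \<psi> (V \<psi>)"
    by (subst (2) \<psi>_def) (simp add: sum_left scaleR_left)
  ultimately have "(\<Sum>j\<in>J. (dual (\<xi> j) r)\<^sup>2) \<le> 0"
    using tested V_nonneg by linarith
  then have "(\<Sum>j\<in>J. (dual (\<xi> j) r)\<^sup>2) = 0"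
    by (simp add: antisym sum_nonneg)
  then show ?thesis
    using \<open>finite J\<close> by (simp add: sum_nonneg_eq_0_iff)
qed

theorem proposition3p3:
  fixes eps :: "'x::real_normed_vector \<Rightarrow> 'e::real_inner"
    and A :: "'e \<Rightarrow> 'e"
    and tr :: "'x \<Rightarrow> 'z::real_normed_vector"
    and iota :: "'x \<Rightarrow> 'l::real_inner"
    and dual :: "'y::real_normed_vector \<Rightarrow> 'z \<Rightarrow> real"
    and V :: "'y \<Rightarrow> 'z" and K :: "'z \<Rightarrow> 'z" and K' :: "'y \<Rightarrow> 'y" and W :: "'z \<Rightarrow> 'y"
    and f :: 'l and u0 :: 'z and \<phi>0 :: 'y
    and Xh :: "'x set" and Yh :: "'y set"
    and D :: nat and \<xi> :: "nat \<Rightarrow> 'y"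
    and u :: 'x and \<phi> :: 'y
  assumes eps_lin: "bounded_linear eps"
    and tr_lin: "bounded_linear tr"
    and iota_lin: "bounded_linear iota"
    and dual_bil: "bounded_bilinear dual"
    and V_lin: "bounded_linear V" and K_lin: "bounded_linear K"
    and K'_lin: "bounded_linear K'" and W_lin: "bounded_linear W"
    and V_sym: "\<And>\<phi> \<psi>. dual \<psi> (V \<phi>) = dual \<phi> (V \<psi>)"
    and V_ell: "\<exists>c>0. \<forall>\<psi>. c * (norm \<psi>)\<^sup>2 \<le> dual \<psi> (V \<psi>)"
    and A_mono: "\<exists>C>0. \<forall>v w. C * (norm (eps v - eps w))\<^sup>2
                   \<le> inner (A (eps v) - A (eps w)) (eps v - eps w)"
    and A_lip: "\<exists>L. \<forall>v w. norm (A (eps v) - A (eps w)) \<le> L * norm (eps v - eps w)"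
    and Xh_sub: "subspace Xh" and Xh_closed: "closed Xh"
    and Yh_sub: "subspace Yh" and Yh_closed: "closed Yh"
    and \<xi>_in: "\<And>j. j \<in> {1..D} \<Longrightarrow> \<xi> j \<in> Yh"
    and \<xi>_indep: "\<And>c. (\<Sum>j=1..D. c j *\<^sub>R \<xi> j) = 0 \<Longrightarrow> \<forall>j\<in>{1..D}. c j = 0"
    and u_in: "u \<in> Xh" and \<phi>_in: "\<phi> \<in> Yh"
  shows "(\<forall>v\<in>Xh. \<forall>\<psi>\<in>Yh. coupling_b eps A tr dual V K K' W u \<phi> v \<psi>
                        = coupling_F iota tr dual K W f u0 \<phi>0 v \<psi>)
     \<longleftrightarrow> (\<forall>v\<in>Xh. \<forall>\<psi>\<in>Yh. stab_b eps A tr dual V K K' W D \<xi> u \<phi> v \<psi>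
                        = stab_F iota tr dual V K W f u0 \<phi>0 D \<xi> v \<psi>)"
    (is "?original \<longleftrightarrow> ?stabilized")
proof -
  define r where "r = calderon_residual K V (tr u) \<phi> - ((1/2) *\<^sub>R u0 - K u0)"
  note linear = bounded_linear.linear[OF eps_lin] bounded_linear.linear[OF tr_lin]
    bounded_linear.linear[OF iota_lin]
  have zero_test: "coupling_b eps A tr dual V K K' W u \<phi> 0 \<psi> - coupling_F iota tr dual K W f u0 \<phi>0 0 \<psi>
      = dual \<psi> r" for \<psi>
    unfolding r_def by (rule coupling_b_minus_coupling_F_zero_test[OF linear dual_bil])
  have stab_difference:
    "stab_b eps A tr dual V K K' W D \<xi> u \<phi> v \<psi> - stab_F iota tr dual V K W f u0 \<phi>0 D \<xi> v \<psi>
      = coupling_b eps A tr dual V K K' W u \<phi> v \<psi> - coupling_F iota tr dual K W f u0 \<phi>0 v \<psi>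
        + (\<Sum>j=1..D. dual (\<xi> j) r * dual (\<xi> j) (calderon_residual K V (tr v) \<psi>))" for v \<psi>
    unfolding r_def by (rule stab_b_minus_stab_F[OF dual_bil])
  have residual_zero: "calderon_residual K V (tr 0) \<psi> = V \<psi>" for \<psi>
    using linear(2) bounded_linear.linear[OF K_lin] by (simp add: linear_0 calderon_residual_zero_left)
  have same_problem: "?original \<longleftrightarrow> ?stabilized" if "\<forall>j\<in>{1..D}. dual (\<xi> j) r = 0"
    using stab_eq_iff_coupling_eq[where tr = tr and u = u and K = K, OF dual_bil that[unfolded r_def]]
    by blast
  have "0 \<in> Xh"
    using Xh_sub by (rule subspace_0)
  show ?thesis
  proof
    assume ?original
    have "dual (\<xi> j) r = 0" if "j \<in> {1..D}" for j
      using \<open>?original\<close> \<open>0 \<in> Xh\<close> \<xi>_in[OF that] zero_test[of "\<xi> j"] by simp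
    then show ?stabilized
      using same_problem \<open>?original\<close> by blast
  next
    assume ?stabilized
    define \<psi> where "\<psi> = (\<Sum>j=1..D. dual (\<xi> j) r *\<^sub>R \<xi> j)"
    have "\<psi> \<in> Yh"
      unfolding \<psi>_def using Yh_sub \<xi>_in by (intro subspace_sum subspace_scale) auto
    have "0 \<le> dual \<psi> (V \<psi>)"
      using V_ell by (meson mult_nonneg_nonneg less_imp_le zero_le_power2 order_trans)
    moreover have "dual \<psi> r + (\<Sum>j=1..D. dual (\<xi> j) r * dual (\<xi> j) (V \<psi>)) = 0"
      using \<open>?stabilized\<close> \<open>0 \<in> Xh\<close> \<open>\<psi> \<in> Yh\<close> stab_difference[of 0 \<psi>]
      by (simp add: zero_test residual_zero)
    ultimately have "\<forall>j\<in>{1..D}. dual (\<xi> j) r = 0"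
      by (rule stabilization_coefficients_vanish[OF dual_bil finite_atLeastAtMost \<psi>_def])
    then show ?original
      using same_problem \<open>?stabilized\<close> by blast
  qed
qed

end
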